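(* For every non-self-intersecting 4-periodic of the elliptic billiard, the product of its area $A$ and the area $A'$ of its outer polygon is $$A\,A'=8a^2b^2.$$
   Context: The elliptic billiard is $\mathcal{E}: x^2/a^2+y^2/b^2=1$, $a>b>0$. A non-self-intersecting 4-periodic is a quadrilateral $P_1P_2P_3P_4$ inscribed in $\mathcal{E}$ which is a closed billiard trajectory (at each vertex the normal to $\mathcal{E}$ bisects the angle between the two incident sides) with confocal elliptic caustic $x^2/a''^2+y^2/b''^2=1$, $a''=a^2/\sqrt{a^2+b^2}$, $b''=b^2/\sqrt{a^2+b^2}$; explicitly, for $P_1=(x_1,y_1)\in\mathcal{E}$: $P_2=\left(-\frac{a^4y_1}{\sqrt{b^6x_1^2+a^6y_1^2}},\frac{b^4x_1}{\sqrt{b^6x_1^2+a^6y_1^2}}\right)$, $P_3=-P_1$, $P_4=-P_2$. The outer polygon is the quadrilateral whose sides lie on the tangent lines to $\mathcal{E}$ at $P_1,\dots,P_4$ (vertex $P_i'$ is the intersection of the tangents at $P_i$ and $P_{i+1}$). *)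

theory Defs
  imports Complex_Main
begin

type_synonym pt = "real \<times> real"

definition on_ellipse :: "real \<Rightarrow> real \<Rightarrow> pt \<Rightarrow> bool" where
  "on_ellipse a b P \<longleftrightarrow> (fst P)^2 / a^2 + (snd P)^2 / b^2 = 1"

definition per4_P2 :: "real \<Rightarrow> real \<Rightarrow> pt \<Rightarrow> pt" where
  "per4_P2 a b P = (let x = fst P; y = snd P; d = sqrt (b^6 * x^2 + a^6 * y^2)
                    in (- (a^4 * y) / d, b^4 * x / d))"

definition per4 :: "real \<Rightarrow> real \<Rightarrow> pt \<Rightarrow> pt list" where
  "per4 a b P = (let Q = per4_P2 a b P in [P, Q, (- fst P, - snd P), (- fst Q, - snd Q)])"

definition on_tangent :: "real \<Rightarrow> real \<Rightarrow> pt \<Rightarrow> pt \<Rightarrow> bool" where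
  "on_tangent a b T Q \<longleftrightarrow> fst Q * fst T / a^2 + snd Q * snd T / b^2 = 1"

definition tangent_meet :: "real \<Rightarrow> real \<Rightarrow> pt \<Rightarrow> pt \<Rightarrow> pt" where
  "tangent_meet a b T U = (THE Q. on_tangent a b T Q \<and> on_tangent a b U Q)"

definition outer_poly :: "real \<Rightarrow> real \<Rightarrow> pt list \<Rightarrow> pt list" where
  "outer_poly a b ps = map (\<lambda>i. tangent_meet a b (ps ! i) (ps ! ((i + 1) mod length ps)))
                          [0..<length ps]"

definition poly_area :: "pt list \<Rightarrow> real" where
  "poly_area ps = \<bar>(\<Sum>i<length ps. fst (ps ! i) * snd (ps ! ((i + 1) mod length ps))
                                  - fst (ps ! ((i + 1) mod length ps)) * snd (ps ! i))\<bar> / 2"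

end

theory Submission
  imports Defs "HOL-Library.Product_Plus"
begin

text \<open>The 4-periodic is the parallelogram with vertices \<open>\<plusminus>P\<^sub>1, \<plusminus>P\<^sub>2\<close>, of area
  \<open>2 \<bar>det(P\<^sub>1, P\<^sub>2)\<bar>\<close>. Solving the tangent equations by Cramer's rule shows that the
  outer polygon is again a parallelogram, with vertices \<open>\<plusminus>P\<^sub>1', \<plusminus>P\<^sub>2'\<close> and
  \<open>det(P\<^sub>1', P\<^sub>2') = 2a\<^sup>2b\<^sup>2 / det(P\<^sub>1, P\<^sub>2)\<close>, so the product of the areas is
  \<open>8a\<^sup>2b\<^sup>2\<close> for every such parallelogram. The billiard only has to
  supply a nondegenerate parallelogram, and indeed
  \<open>det(P\<^sub>1, P\<^sub>2) = (b\<^sup>4x\<^sub>1\<^sup>2 + a\<^sup>4y\<^sub>1\<^sup>2) / \<surd>(b\<^sup>6x\<^sub>1\<^sup>2 + a\<^sup>6y\<^sub>1\<^sup>2) > 0\<close>.\<close>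

definition det2 :: "pt \<Rightarrow> pt \<Rightarrow> real" where
  "det2 T U = fst T * snd U - fst U * snd T"

lemma tangent_meet_eq:
  assumes "a \<noteq> 0" "b \<noteq> 0" "det2 T U \<noteq> 0"
  shows "tangent_meet a b T U =
    (a^2 * (snd U - snd T) / det2 T U, b^2 * (fst T - fst U) / det2 T U)"
proof -
  obtain p q r s where T: "T = (p, q)" and U: "U = (r, s)" by fastforce
  define w where "w = p * s - r * q"
  have w: "w \<noteq> 0" using assms(3) by (simp add: T U w_def det2_def)
  have tangent_iff: "on_tangent a b (m, n) (X, Y) \<longleftrightarrow> X * m * b^2 + Y * n * a^2 = a^2 * b^2"
    for m n X Y using assms(1,2) by (auto simp: on_tangent_def field_simps)
  have "on_tangent a b T Q \<and> on_tangent a b U Q \<longleftrightarrow>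
        Q = (a^2 * (s - q) / w, b^2 * (p - r) / w)" for Q
  proof -
    obtain X Y where Q: "Q = (X, Y)" by fastforce
    have "X * p * b^2 + Y * q * a^2 = a^2 * b^2 \<and> X * r * b^2 + Y * s * a^2 = a^2 * b^2
          \<longleftrightarrow> X * w = a^2 * (s - q) \<and> Y * w = b^2 * (p - r)"
      (is "?system \<longleftrightarrow> ?cramer")
    proof
      assume ?system
      then have "X * w * b^2 = a^2 * (s - q) * b^2" "Y * w * a^2 = b^2 * (p - r) * a^2"
        unfolding w_def by algebra+
      then show ?cramer using assms(1,2) by simp
    next
      assume ?cramer
      then show ?system using w unfolding w_def by algebra
    qed
    then show ?thesis
      using w by (simp add: Q T U tangent_iff eq_divide_eq mult.commute)
  qed
  then show ?thesis by (simp add: tangent_meet_def T U w_def det2_def)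
qed

lemma poly_area_quadrilateral:
  "poly_area [A, B, C, D] = \<bar>det2 A B + det2 B C + det2 C D + det2 D A\<bar> / 2"
proof -
  have "{..<4::nat} = {0, 1, 2, 3}" by auto
  then show ?thesis by (simp add: poly_area_def det2_def algebra_simps)
qed

lemma outer_poly_quadrilateral:
  "outer_poly a b [A, B, C, D] =
    [tangent_meet a b A B, tangent_meet a b B C, tangent_meet a b C D, tangent_meet a b D A]"
proof -
  have "[0..<4] = [0, 1, 2, 3::nat]" by (simp add: upt_rec)
  then show ?thesis by (simp add: outer_poly_def)
qed

lemma poly_area_parallelogram:
  "poly_area [T, U, - T, - U] = 2 * \<bar>det2 T U\<bar>"
proof -
  have "det2 T U + det2 U (- T) + det2 (- T) (- U) + det2 (- U) T = 4 * det2 T U"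
    by (simp add: det2_def algebra_simps)
  then show ?thesis by (simp add: poly_area_quadrilateral)
qed

lemma tangent_meet_uminus:
  assumes "a \<noteq> 0" "b \<noteq> 0" "det2 T U \<noteq> 0"
  shows "tangent_meet a b (- T) (- U) = - tangent_meet a b T U"
proof -
  have "det2 (- T) (- U) = det2 T U" by (simp add: det2_def)
  with assms show ?thesis by (simp add: tangent_meet_eq minus_divide_left algebra_simps)
qed

lemma outer_poly_parallelogram:
  assumes "a \<noteq> 0" "b \<noteq> 0" "det2 T U \<noteq> 0"
  defines "T' \<equiv> tangent_meet a b T U" and "U' \<equiv> tangent_meet a b U (- T)"
  shows "outer_poly a b [T, U, - T, - U] = [T', U', - T', - U']"
    and "det2 T' U' = 2 * a^2 * b^2 / det2 T U"
proof -
  have det_UT: "det2 U (- T) = det2 T U" by (simp add: det2_def)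
  show "outer_poly a b [T, U, - T, - U] = [T', U', - T', - U']"
    using tangent_meet_uminus [OF assms(1-3)] tangent_meet_uminus [of a b U "- T"] assms(1-3)
    by (simp add: outer_poly_quadrilateral T'_def U'_def det_UT)
  obtain p q r s where T: "T = (p, q)" and U: "U = (r, s)" by fastforce
  define w where "w = det2 T U"
  have w: "w \<noteq> 0" "w = p * s - r * q" using assms(3) by (simp_all add: w_def T U det2_def)
  have "T' = (a^2 * (s - q) / w, b^2 * (p - r) / w)"
    and "U' = (- (a^2 * (q + s)) / w, b^2 * (p + r) / w)"
    using assms(1-3) unfolding T'_def U'_def
    by (simp_all add: tangent_meet_eq det_UT w_def [symmetric])
      (simp_all add: T U minus_divide_left algebra_simps)
  then have "det2 T' U' = a^2 * b^2 * ((s - q) * (p + r) + (q + s) * (p - r)) / w^2"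
    using w(1) by (simp add: det2_def power2_eq_square field_simps)
  also have "(s - q) * (p + r) + (q + s) * (p - r) = 2 * w"
    using w(2) by (simp add: algebra_simps)
  also have "a^2 * b^2 * (2 * w) / w^2 = 2 * a^2 * b^2 / w"
    using w(1) by (simp add: power2_eq_square)
  finally show "det2 T' U' = 2 * a^2 * b^2 / det2 T U" by (simp add: w_def)
qed

lemma poly_area_mult_outer_poly_parallelogram:
  assumes "a \<noteq> 0" "b \<noteq> 0" "det2 T U \<noteq> 0"
  shows "poly_area [T, U, - T, - U] * poly_area (outer_poly a b [T, U, - T, - U])
    = 8 * a^2 * b^2"
  using assms
  by (simp add: outer_poly_parallelogram poly_area_parallelogram abs_mult abs_divide)

lemma per4_parallelogram:
  assumes "a \<noteq> 0" "b \<noteq> 0" "on_ellipse a b P"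
  shows "per4 a b P = [P, per4_P2 a b P, - P, - per4_P2 a b P]"
    and "det2 P (per4_P2 a b P) \<noteq> 0"
proof -
  obtain x y where P: "P = (x, y)" by fastforce
  have "x \<noteq> 0 \<or> y \<noteq> 0" using assms(3) by (auto simp: P on_ellipse_def)
  then have pos6: "b^6 * x^2 + a^6 * y^2 > 0" and pos4: "b^4 * x^2 + a^4 * y^2 > 0"
    using assms(1,2) by (auto intro: add_pos_nonneg add_nonneg_pos)
  define d where "d = sqrt (b^6 * x^2 + a^6 * y^2)"
  have "d > 0" using pos6 by (simp add: d_def)
  have "per4_P2 a b P = (- (a^4 * y) / d, b^4 * x / d)"
    by (simp add: per4_P2_def Let_def P d_def)
  then have "det2 P (per4_P2 a b P) = (b^4 * x^2 + a^4 * y^2) / d"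
    using \<open>d > 0\<close> by (simp add: P det2_def field_simps power2_eq_square)
  with pos4 \<open>d > 0\<close> show "det2 P (per4_P2 a b P) \<noteq> 0" by simp
  show "per4 a b P = [P, per4_P2 a b P, - P, - per4_P2 a b P]"
    by (simp add: per4_def Let_def uminus_prod_def)
qed

theorem mainTheorem13:
  fixes a b :: real and P :: pt
  assumes "a > b" and "b > 0" and "on_ellipse a b P"
  shows "poly_area (per4 a b P) * poly_area (outer_poly a b (per4 a b P)) = 8 * a^2 * b^2"
proof -
  have "a \<noteq> 0" "b \<noteq> 0" using assms(1,2) by auto
  with assms(3) show ?thesis
    by (simp add: per4_parallelogram poly_area_mult_outer_poly_parallelogram)
qed

end
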